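(* The embedding functor $i_{\mathrm{tffr}}\colon\mathcal R\hookrightarrow\mathfrak{sl}(2)\text{-}\mathrm{Mod}_{\mathrm{tffr}}$ is a right adjoint of the rationalization functor $F_{\mathrm{rat}}\colon\mathfrak{sl}(2)\text{-}\mathrm{Mod}_{\mathrm{tffr}}\to\mathcal R$. Therefore $\mathcal R$ is a reflective localization of $\mathfrak{sl}(2)\text{-}\mathrm{Mod}_{\mathrm{tffr}}$ with localization functor $F_{\mathrm{rat}}$. Moreover, $F_{\mathrm{rat}}$ is faithful.
   Context: $\mathfrak{sl}(2)$ has basis $L_{-1}=f$, $L_0=-\tfrac12 h$, $L_1=-e$ for a Chevalley basis $e,f,h$. Every $\mathfrak{sl}(2)$-module $(V,\rho)$ is a $\mathbb{C}[z]$-module via $z\cdot v=\rho(L_0)v$. $\mathfrak{sl}(2)\text{-}\mathrm{Mod}_{\mathrm{tffr}}$ is the full subcategory of $\mathfrak{sl}(2)$-modules that are torsion free as $\mathbb{C}[z]$-modules and of finite rank ($S^{-1}V$ finite-dimensional over $\mathbb{C}(z)$, $S=\mathbb{C}[z]\setminus\{0\}$). $\mathcal R$ is its full subcategory of rational modules, i.e. those which with their $\mathbb{C}[z]$-structure are finite-dimensional $\mathbb{C}(z)$-vector spaces. The rationalization functor sends $(V,\rho)$ to $(S^{-1}V,\rho_{\mathrm{rat}})$ with $\rho_{\mathrm{rat}}(L_{\pm1})(v/p(z))=\rho(L_{\pm1})(v)/p(z\pm1)$ and $\rho_{\mathrm{rat}}(L_0)(v/p(z))=zv/p(z)$, and a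 morphism $\phi$ to $S^{-1}\phi$. *)

theory Defs
  imports "HOL-Algebra.Module" "HOL-Computational_Algebra.Polynomial"
begin

definition Cring :: "complex ring" where
  "Cring = \<lparr>carrier = UNIV, monoid.mult = (*), monoid.one = 1, zero = 0, add = (+)\<rparr>"

text \<open>A complex vector space (HOL-Algebra module over Cring) together with the
  action of the basis L_{-1} = f, L_0 = -h/2, L_1 = -e of sl(2):
  fields Lm = rho(L_{-1}), Lz = rho(L_0), Lp = rho(L_1).\<close>

record 'b sl2mod = "(complex, 'b) module" +
  Lm :: "'b \<Rightarrow> 'b"
  Lz :: "'b \<Rightarrow> 'b"
  Lp :: "'b \<Rightarrow> 'b"

definition lin_map :: "(complex, 'b, 'm) module_scheme \<Rightarrow> (complex, 'c, 'n) module_scheme \<Rightarrow> ('b \<Rightarrow> 'c) \<Rightarrow> bool" where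
  "lin_map M N f \<longleftrightarrow> f \<in> carrier M \<rightarrow> carrier N \<and>
     (\<forall>x\<in>carrier M. \<forall>y\<in>carrier M. f (x \<oplus>\<^bsub>M\<^esub> y) = f x \<oplus>\<^bsub>N\<^esub> f y) \<and>
     (\<forall>c. \<forall>x\<in>carrier M. f (c \<odot>\<^bsub>M\<^esub> x) = c \<odot>\<^bsub>N\<^esub> f x)"

text \<open>Lie algebra representation: the three operators are linear and satisfy
  [L_m, L_n] = (m - n) L_{m+n}, i.e. [L_1,L_{-1}] = 2 L_0, [L_0,L_1] = -L_1,
  [L_0,L_{-1}] = L_{-1} (equivalently [h,e]=2e, [h,f]=-2f, [e,f]=h).\<close>

definition sl2_module :: "'b sl2mod \<Rightarrow> bool" where
  "sl2_module M \<longleftrightarrow> Module.module Cring M \<and>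
     lin_map M M (Lm M) \<and> lin_map M M (Lz M) \<and> lin_map M M (Lp M) \<and>
     (\<forall>v\<in>carrier M.
        Lp M (Lm M v) \<ominus>\<^bsub>M\<^esub> Lm M (Lp M v) = (2::complex) \<odot>\<^bsub>M\<^esub> Lz M v \<and>
        Lz M (Lp M v) \<ominus>\<^bsub>M\<^esub> Lp M (Lz M v) = \<ominus>\<^bsub>M\<^esub> Lp M v \<and>
        Lz M (Lm M v) \<ominus>\<^bsub>M\<^esub> Lm M (Lz M v) = Lm M v)"

definition sl2_hom :: "'b sl2mod \<Rightarrow> 'c sl2mod \<Rightarrow> ('b \<Rightarrow> 'c) \<Rightarrow> bool" where
  "sl2_hom M N f \<longleftrightarrow> lin_map M N f \<and>
     (\<forall>v\<in>carrier M. f (Lm M v) = Lm N (f v) \<and> f (Lz M v) = Lz N (f v) \<and>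
                      f (Lp M v) = Lp N (f v))"

fun pact_list :: "'b sl2mod \<Rightarrow> complex list \<Rightarrow> 'b \<Rightarrow> 'b" where
  "pact_list M [] v = \<zero>\<^bsub>M\<^esub>"
| "pact_list M (c # cs) v = c \<odot>\<^bsub>M\<^esub> v \<oplus>\<^bsub>M\<^esub> Lz M (pact_list M cs v)"

text \<open>pact M p v = p(rho(L_0)) v  (Horner evaluation).\<close>
definition pact :: "'b sl2mod \<Rightarrow> complex poly \<Rightarrow> 'b \<Rightarrow> 'b" where
  "pact M p v = pact_list M (coeffs p) v"

definition torsion_free :: "'b sl2mod \<Rightarrow> bool" where
  "torsion_free M \<longleftrightarrow> (\<forall>p. p \<noteq> 0 \<longrightarrow> (\<forall>v\<in>carrier M. pact M p v = \<zero>\<^bsub>M\<^esub> \<longrightarrow> v = \<zero>\<^bsub>M\<^esub>))"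

definition pspan :: "'b sl2mod \<Rightarrow> 'b set \<Rightarrow> 'b set" where
  "pspan M B = {finsum M (\<lambda>b. pact M (c b) b) B | c. True}"

text \<open>Finite rank: S^{-1}V is finite dimensional over C(z), i.e. spanned over C(z)
  by finitely many fractions; clearing denominators, by finitely many v/1.\<close>
definition finite_rank :: "'b sl2mod \<Rightarrow> bool" where
  "finite_rank M \<longleftrightarrow> (\<exists>B. finite B \<and> B \<subseteq> carrier M \<and>
      (\<forall>v\<in>carrier M. \<exists>s. s \<noteq> 0 \<and> pact M s v \<in> pspan M B))"

definition tffr :: "'b sl2mod \<Rightarrow> bool" where
  "tffr M \<longleftrightarrow> sl2_module M \<and> torsion_free M \<and> finite_rank M"

text \<open>Objects of R: every nonzero polynomial in z acts bijectively, so the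
  C[z]-structure is a (finite dimensional) C(z)-vector space structure.\<close>
definition rational :: "'b sl2mod \<Rightarrow> bool" where
  "rational M \<longleftrightarrow> tffr M \<and> (\<forall>p. p \<noteq> 0 \<longrightarrow> bij_betw (pact M p) (carrier M) (carrier M))"

definition frac_rel :: "'b sl2mod \<Rightarrow> (('b \<times> complex poly) \<times> ('b \<times> complex poly)) set" where
  "frac_rel M = {((v, p), (w, q)). v \<in> carrier M \<and> w \<in> carrier M \<and> p \<noteq> 0 \<and> q \<noteq> 0 \<and>
       (\<exists>s. s \<noteq> 0 \<and> pact M s (pact M q v \<ominus>\<^bsub>M\<^esub> pact M p w) = \<zero>\<^bsub>M\<^esub>)}"

definition frac :: "'b sl2mod \<Rightarrow> 'b \<Rightarrow> complex poly \<Rightarrow> ('b \<times> complex poly) set" where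
  "frac M v p = frac_rel M `` {(v, p)}"

definition rep :: "('b \<times> complex poly) set \<Rightarrow> 'b \<times> complex poly" where
  "rep X = (SOME vp. vp \<in> X)"

definition Frat :: "'b sl2mod \<Rightarrow> ('b \<times> complex poly) set sl2mod" where
  "Frat M = \<lparr>carrier = {frac M v p | v p. v \<in> carrier M \<and> p \<noteq> 0},
     monoid.mult = (\<lambda>_ _. frac M \<zero>\<^bsub>M\<^esub> 1), monoid.one = frac M \<zero>\<^bsub>M\<^esub> 1,
     zero = frac M \<zero>\<^bsub>M\<^esub> 1,
     add = (\<lambda>X Y. case rep X of (v, p) \<Rightarrow> case rep Y of (w, q) \<Rightarrow>
              frac M (pact M q v \<oplus>\<^bsub>M\<^esub> pact M p w) (p * q)),
     module.smult = (\<lambda>c X. case rep X of (v, p) \<Rightarrow> frac M (c \<odot>\<^bsub>M\<^esub> v) p),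
     Lm = (\<lambda>X. case rep X of (v, p) \<Rightarrow> frac M (Lm M v) (pcompose p [:-1, 1:])),
     Lz = (\<lambda>X. case rep X of (v, p) \<Rightarrow> frac M (Lz M v) p),
     Lp = (\<lambda>X. case rep X of (v, p) \<Rightarrow> frac M (Lp M v) (pcompose p [:1, 1:]))\<rparr>"

definition Fmor :: "'b sl2mod \<Rightarrow> 'c sl2mod \<Rightarrow> ('b \<Rightarrow> 'c) \<Rightarrow> ('b \<times> complex poly) set \<Rightarrow> ('c \<times> complex poly) set" where
  "Fmor M N f X = (case rep X of (v, p) \<Rightarrow> frac N (f v) p)"

text \<open>The canonical map V \<rightarrow> S^{-1}V, v \<mapsto> v/1 (unit of the adjunction).\<close>
definition eta :: "'b sl2mod \<Rightarrow> 'b \<Rightarrow> ('b \<times> complex poly) set" where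
  "eta M v = frac M v 1"

end

theory Submission
  imports Defs
begin

text \<open>On a torsion free module v/p = w/q holds iff q v = p w, so the operations of
  S^{-1}V, computed on chosen representatives of fractions, are well defined.  The relations
  [L_0, L_{\<mp>1}] = \<plusminus>L_{\<mp>1} give L_{\<mp>1} p(L_0) = p(L_0 \<mp> 1) L_{\<mp>1}, which is what
  makes the shifted denominators in the action of L_{\<plusminus>1} consistent.  Every nonzero r acts
  bijectively on S^{-1}V, with inverse v/p \<mapsto> v/(r p), so S^{-1}V is rational.  A morphism
  f from V into a rational W extends uniquely along v \<mapsto> v/1, because the image of v/p must
  be the unique w with p w = f v.  Faithfulness holds because v/1 = w/1 forces v = w.\<close>

lemma Cring_simps [simp]:
  "carrier Cring = UNIV" "(\<otimes>\<^bsub>Cring\<^esub>) = (*)" "(\<oplus>\<^bsub>Cring\<^esub>) = (+)"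
  "\<one>\<^bsub>Cring\<^esub> = 1" "\<zero>\<^bsub>Cring\<^esub> = 0"
  by (simp_all add: Cring_def)

lemma cring_Cring: "cring Cring"
  apply (rule cringI)
    apply (rule abelian_groupI, simp_all add: algebra_simps)
   apply (metis add.right_inverse)
  apply (rule comm_monoidI, simp_all add: algebra_simps)
  done

lemma Cring_minus [simp]: "\<ominus>\<^bsub>Cring\<^esub> a = - a"
proof -
  interpret cring Cring by (rule cring_Cring)
  show ?thesis by (rule minus_equality) simp_all
qed

lemma sl2_hom_closed: "sl2_hom M N f \<Longrightarrow> x \<in> carrier M \<Longrightarrow> f x \<in> carrier N"
  by (auto simp: sl2_hom_def lin_map_def)

lemma sl2_hom_add:
  "sl2_hom M N f \<Longrightarrow> x \<in> carrier M \<Longrightarrow> y \<in> carrier M \<Longrightarrow> f (x \<oplus>\<^bsub>M\<^esub> y) = f x \<oplus>\<^bsub>N\<^esub> f y"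
  by (simp add: sl2_hom_def lin_map_def)

lemma sl2_hom_commute:
  assumes "sl2_hom M N f" "x \<in> carrier M"
  shows "f (c \<odot>\<^bsub>M\<^esub> x) = c \<odot>\<^bsub>N\<^esub> f x"
    "f (Lm M x) = Lm N (f x)" "f (Lz M x) = Lz N (f x)" "f (Lp M x) = Lp N (f x)"
  using assms by (simp_all add: sl2_hom_def lin_map_def)

lemma sl2_hom_comp: "sl2_hom M N f \<Longrightarrow> sl2_hom N K g \<Longrightarrow> sl2_hom M K (g \<circ> f)"
  unfolding sl2_hom_def lin_map_def by (auto simp: Pi_iff)

lemma lin_map_zero:
  assumes "Module.module Cring M" "Module.module Cring N" "lin_map M N f"
  shows "f \<zero>\<^bsub>M\<^esub> = \<zero>\<^bsub>N\<^esub>"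
proof -
  interpret M: Module.module Cring M by fact
  interpret N: Module.module Cring N by fact
  have "f ((0::complex) \<odot>\<^bsub>M\<^esub> \<zero>\<^bsub>M\<^esub>) = (0::complex) \<odot>\<^bsub>N\<^esub> f \<zero>\<^bsub>M\<^esub>"
    using assms(3) unfolding lin_map_def by blast
  moreover have "f \<zero>\<^bsub>M\<^esub> \<in> carrier N"
    using assms(3) unfolding lin_map_def by blast
  ultimately show ?thesis
    using M.smult_l_null[of "\<zero>\<^bsub>M\<^esub>"] N.smult_l_null[of "f \<zero>\<^bsub>M\<^esub>"] by simp
qed

lemma pcompose_shift_nonzero: "(p::complex poly) \<noteq> 0 \<Longrightarrow> pcompose p [:c, 1:] \<noteq> 0"
  using pcompose_eq_0[of p "[:c, 1:]"] by auto

lemma pcompose_shift_down_up: "pcompose (pcompose (p::complex poly) [:-1, 1:]) [:1, 1:] = p"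
  and pcompose_shift_up_down: "pcompose (pcompose (p::complex poly) [:1, 1:]) [:-1, 1:] = p"
  by (simp_all add: pcompose_assoc[symmetric] pcompose_pCons)

locale sl2_rep =
  fixes M :: "'b sl2mod" (structure)
  assumes sl2: "sl2_module M"
begin

sublocale Module.module Cring M
  using sl2 by (simp add: sl2_module_def)

lemma lin_map_Lm: "lin_map M M (Lm M)"
  and lin_map_Lz: "lin_map M M (Lz M)"
  and lin_map_Lp: "lin_map M M (Lp M)"
  using sl2 by (simp_all add: sl2_module_def)

lemma Lm_closed [simp]: "v \<in> carrier M \<Longrightarrow> Lm M v \<in> carrier M"
  and Lz_closed [simp]: "v \<in> carrier M \<Longrightarrow> Lz M v \<in> carrier M"
  and Lp_closed [simp]: "v \<in> carrier M \<Longrightarrow> Lp M v \<in> carrier M"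
  using lin_map_Lm lin_map_Lz lin_map_Lp by (auto simp: lin_map_def)

lemma Lm_add: "v \<in> carrier M \<Longrightarrow> w \<in> carrier M \<Longrightarrow> Lm M (v \<oplus> w) = Lm M v \<oplus> Lm M w"
  and Lz_add: "v \<in> carrier M \<Longrightarrow> w \<in> carrier M \<Longrightarrow> Lz M (v \<oplus> w) = Lz M v \<oplus> Lz M w"
  and Lp_add: "v \<in> carrier M \<Longrightarrow> w \<in> carrier M \<Longrightarrow> Lp M (v \<oplus> w) = Lp M v \<oplus> Lp M w"
  using lin_map_Lm lin_map_Lz lin_map_Lp by (auto simp: lin_map_def)

lemma Lm_smult: "v \<in> carrier M \<Longrightarrow> Lm M (c \<odot> v) = c \<odot> Lm M v"
  and Lz_smult: "v \<in> carrier M \<Longrightarrow> Lz M (c \<odot> v) = c \<odot> Lz M v"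
  and Lp_smult: "v \<in> carrier M \<Longrightarrow> Lp M (c \<odot> v) = c \<odot> Lp M v"
  using lin_map_Lm lin_map_Lz lin_map_Lp by (auto simp: lin_map_def)

lemma smult_zero_scalar [simp]: "v \<in> carrier M \<Longrightarrow> (0::complex) \<odot> v = \<zero>"
  using smult_l_null[of v] by simp

lemma smult_one_scalar [simp]: "v \<in> carrier M \<Longrightarrow> (1::complex) \<odot> v = v"
  using smult_one[of v] by simp

lemma smult_add_scalar: "v \<in> carrier M \<Longrightarrow> (a + b) \<odot> v = a \<odot> v \<oplus> b \<odot> v"
  using smult_l_distr[of a b v] by simp

lemma smult_mult_scalar: "v \<in> carrier M \<Longrightarrow> (a * b) \<odot> v = a \<odot> (b \<odot> v)"
  using smult_assoc1[of a b v] by simp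

lemma smult_add_vec: "v \<in> carrier M \<Longrightarrow> w \<in> carrier M \<Longrightarrow> a \<odot> (v \<oplus> w) = a \<odot> v \<oplus> a \<odot> w"
  using smult_r_distr[of a v w] by simp

lemma smult_zero_vec [simp]: "a \<odot> \<zero> = \<zero>"
  using smult_r_null[of a] by simp

lemma smult_minus_one: "v \<in> carrier M \<Longrightarrow> (-1) \<odot> v = \<ominus> v"
  using smult_l_minus[of 1 v] by simp

lemma Lm_zero [simp]: "Lm M \<zero> = \<zero>"
  and Lz_zero [simp]: "Lz M \<zero> = \<zero>"
  and Lp_zero [simp]: "Lp M \<zero> = \<zero>"
  using Lm_smult[of \<zero> 0] Lz_smult[of \<zero> 0] Lp_smult[of \<zero> 0] by simp_all

lemma diff_eq_iff: "a \<in> carrier M \<Longrightarrow> b \<in> carrier M \<Longrightarrow> c \<in> carrier M \<Longrightarrow> a \<ominus> b = c \<longleftrightarrow> a = c \<oplus> b"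
  unfolding a_minus_def by (rule add.inv_solve_right')

lemma diff_eq_zero_iff: "a \<in> carrier M \<Longrightarrow> b \<in> carrier M \<Longrightarrow> a \<ominus> b = \<zero> \<longleftrightarrow> a = b"
  using diff_eq_iff[of a b \<zero>] by simp

lemma commutation_relations:
  assumes "v \<in> carrier M"
  shows "Lp M (Lm M v) \<ominus> Lm M (Lp M v) = (2::complex) \<odot> Lz M v"
    "Lz M (Lp M v) \<ominus> Lp M (Lz M v) = \<ominus> Lp M v"
    "Lz M (Lm M v) \<ominus> Lm M (Lz M v) = Lm M v"
  using sl2 assms by (simp_all add: sl2_module_def)

lemma Lm_Lz: "v \<in> carrier M \<Longrightarrow> Lm M (Lz M v) = (-1) \<odot> Lm M v \<oplus> Lz M (Lm M v)"
  using commutation_relations(3)[of v]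
  by (simp add: diff_eq_iff smult_minus_one a_assoc[symmetric] l_neg)

lemma Lp_Lz: "v \<in> carrier M \<Longrightarrow> Lp M (Lz M v) = Lp M v \<oplus> Lz M (Lp M v)"
  using commutation_relations(2)[of v]
  by (simp add: diff_eq_iff a_assoc[symmetric] r_neg)

lemma pact_pCons: "v \<in> carrier M \<Longrightarrow> pact M (pCons a p) v = a \<odot> v \<oplus> Lz M (pact M p v)"
  by (auto simp: pact_def cCons_def)

lemma pact_0 [simp]: "pact M 0 v = \<zero>"
  by (simp add: pact_def)

lemma pact_closed [simp]: "v \<in> carrier M \<Longrightarrow> pact M p v \<in> carrier M"
  by (induction p) (simp_all add: pact_pCons)

lemma pact_const: "v \<in> carrier M \<Longrightarrow> pact M [:a:] v = a \<odot> v"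
  by (simp add: pact_pCons)

lemma pact_1 [simp]: "v \<in> carrier M \<Longrightarrow> pact M 1 v = v"
  using pact_const[of v 1] by (simp add: one_pCons)

lemma pact_monic_linear: "v \<in> carrier M \<Longrightarrow> pact M [:a, 1:] v = a \<odot> v \<oplus> Lz M v"
  by (simp add: pact_pCons pact_const)

lemma pact_add: "v \<in> carrier M \<Longrightarrow> pact M (p + q) v = pact M p v \<oplus> pact M q v"
proof (induction p arbitrary: q)
  case (pCons a p)
  then show ?case
    by (cases q) (simp add: pact_pCons smult_add_scalar Lz_add a_ac)
qed simp

lemma pact_smult: "v \<in> carrier M \<Longrightarrow> pact M (smult c p) v = c \<odot> pact M p v"
  by (induction p) (simp_all add: pact_pCons smult_add_vec smult_mult_scalar Lz_smult)

lemma pact_mult: "v \<in> carrier M \<Longrightarrow> pact M (p * q) v = pact M p (pact M q v)"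
  by (induction p) (simp_all add: pact_pCons pact_add pact_smult)

lemma pact_commute: "v \<in> carrier M \<Longrightarrow> pact M p (pact M q v) = pact M q (pact M p v)"
  by (metis pact_mult mult.commute)

lemma pact_vadd: "v \<in> carrier M \<Longrightarrow> w \<in> carrier M \<Longrightarrow> pact M p (v \<oplus> w) = pact M p v \<oplus> pact M p w"
  by (induction p) (simp_all add: pact_pCons Lz_add smult_add_vec a_ac)

lemma pact_vsmult: "v \<in> carrier M \<Longrightarrow> pact M p (c \<odot> v) = c \<odot> pact M p v"
  by (induction p)
    (simp_all add: pact_pCons Lz_smult smult_add_vec smult_mult_scalar[symmetric] mult.commute)

lemma pact_vzero [simp]: "pact M p \<zero> = \<zero>"
  using pact_vsmult[of \<zero> p 0] by simp

lemma pact_vminus: "v \<in> carrier M \<Longrightarrow> pact M p (\<ominus> v) = \<ominus> pact M p v"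
  using pact_vsmult[of v p "-1"] by (simp add: smult_minus_one)

lemma pact_vdiff: "v \<in> carrier M \<Longrightarrow> w \<in> carrier M \<Longrightarrow> pact M p (v \<ominus> w) = pact M p v \<ominus> pact M p w"
  by (simp add: a_minus_def pact_vadd pact_vminus)

lemma Lz_pact: "v \<in> carrier M \<Longrightarrow> Lz M (pact M p v) = pact M p (Lz M v)"
  by (induction p) (simp_all add: pact_pCons Lz_add Lz_smult)

lemma Lm_pact: "v \<in> carrier M \<Longrightarrow> Lm M (pact M p v) = pact M (pcompose p [:-1, 1:]) (Lm M v)"
  by (induction p) (simp_all add: pact_pCons pcompose_pCons pact_add pact_mult pact_const
      pact_monic_linear Lm_add Lm_smult Lm_Lz del: mult_pCons_left)

lemma Lp_pact: "v \<in> carrier M \<Longrightarrow> Lp M (pact M p v) = pact M (pcompose p [:1, 1:]) (Lp M v)"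
  by (induction p) (simp_all add: pact_pCons pcompose_pCons pact_add pact_mult pact_const
      pact_monic_linear Lp_add Lp_smult Lp_Lz del: mult_pCons_left)

end

lemma sl2_hom_pact:
  assumes "sl2_rep M" "sl2_rep N" "sl2_hom M N f" "v \<in> carrier M"
  shows "f (pact M p v) = pact N p (f v)"
proof -
  interpret M: sl2_rep M by fact
  interpret N: sl2_rep N by fact
  have "f \<zero>\<^bsub>M\<^esub> = \<zero>\<^bsub>N\<^esub>"
    using assms(3) M.module_axioms N.module_axioms by (simp add: lin_map_zero sl2_hom_def)
  with assms(3,4) show ?thesis
    by (induction p)
      (simp_all add: M.pact_pCons N.pact_pCons sl2_hom_closed sl2_hom_add sl2_hom_commute)
qed

locale tf_sl2_rep = sl2_rep +
  assumes torsion_free: "torsion_free M"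
begin

lemma pact_eq_zero_imp: "s \<noteq> 0 \<Longrightarrow> v \<in> carrier M \<Longrightarrow> pact M s v = \<zero> \<Longrightarrow> v = \<zero>"
  using torsion_free by (auto simp: torsion_free_def)

lemma pact_cancel:
  "s \<noteq> 0 \<Longrightarrow> v \<in> carrier M \<Longrightarrow> w \<in> carrier M \<Longrightarrow> pact M s v = pact M s w \<Longrightarrow> v = w"
  using pact_eq_zero_imp[of s "v \<ominus> w"] by (simp add: pact_vdiff diff_eq_zero_iff)

lemma frac_rel_iff: "((v, p), (w, q)) \<in> frac_rel M \<longleftrightarrow>
   v \<in> carrier M \<and> w \<in> carrier M \<and> p \<noteq> 0 \<and> q \<noteq> 0 \<and> pact M q v = pact M p w"
proof
  assume "((v, p), (w, q)) \<in> frac_rel M"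
  then obtain s where "v \<in> carrier M" "w \<in> carrier M" "p \<noteq> 0" "q \<noteq> 0" "s \<noteq> 0"
    "pact M s (pact M q v \<ominus> pact M p w) = \<zero>"
    by (auto simp: frac_rel_def)
  then show "v \<in> carrier M \<and> w \<in> carrier M \<and> p \<noteq> 0 \<and> q \<noteq> 0 \<and> pact M q v = pact M p w"
    using pact_eq_zero_imp[of s "pact M q v \<ominus> pact M p w"] by (simp add: diff_eq_zero_iff)
next
  assume "v \<in> carrier M \<and> w \<in> carrier M \<and> p \<noteq> 0 \<and> q \<noteq> 0 \<and> pact M q v = pact M p w"
  then show "((v, p), (w, q)) \<in> frac_rel M"
    unfolding frac_rel_def by (auto simp: a_minus_def r_neg intro!: exI[of _ 1])
qed

lemma equiv_frac_rel: "equiv (carrier M \<times> {p. p \<noteq> 0}) (frac_rel M)"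
proof (rule equivI)
  show "frac_rel M \<subseteq> (carrier M \<times> {p. p \<noteq> 0}) \<times> (carrier M \<times> {p. p \<noteq> 0})"
    by (auto simp: frac_rel_def)
  show "refl_on (carrier M \<times> {p. p \<noteq> 0}) (frac_rel M)"
    by (rule refl_onI) (clarsimp simp: frac_rel_iff)
  show "sym (frac_rel M)"
    by (rule symI) (clarsimp simp: frac_rel_iff)
  show "trans (frac_rel M)"
  proof (rule transI)
    fix x y z assume xy: "(x, y) \<in> frac_rel M" and yz: "(y, z) \<in> frac_rel M"
    obtain v p w q u r where xyz: "x = (v, p)" "y = (w, q)" "z = (u, r)"
      by (cases x, cases y, cases z) auto
    have vw: "v \<in> carrier M" "w \<in> carrier M" "p \<noteq> 0" "q \<noteq> 0" "pact M q v = pact M p w"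
      using xy unfolding xyz frac_rel_iff by auto
    have wu: "u \<in> carrier M" "r \<noteq> 0" "pact M r w = pact M q u"
      using yz unfolding xyz frac_rel_iff by auto
    have "pact M q (pact M r v) = pact M r (pact M q v)"
      using vw(1) by (rule pact_commute)
    also have "\<dots> = pact M r (pact M p w)"
      using vw(5) by simp
    also have "\<dots> = pact M p (pact M r w)"
      using vw(2) by (rule pact_commute)
    also have "\<dots> = pact M p (pact M q u)"
      using wu(3) by simp
    also have "\<dots> = pact M q (pact M p u)"
      using wu(1) by (rule pact_commute)
    finally have "pact M r v = pact M p u"
      using vw wu pact_cancel[of q "pact M r v" "pact M p u"] by simp
    then show "(x, z) \<in> frac_rel M"
      using vw wu unfolding xyz frac_rel_iff by blast
  qed
qed

lemma frac_eq_iff: "v \<in> carrier M \<Longrightarrow> w \<in> carrier M \<Longrightarrow> p \<noteq> 0 \<Longrightarrow> q \<noteq> 0 \<Longrightarrow>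
   frac M v p = frac M w q \<longleftrightarrow> pact M q v = pact M p w"
  unfolding frac_def using equiv_class_eq_iff[OF equiv_frac_rel, of "(v, p)" "(w, q)"]
  by (auto simp: frac_rel_iff)

lemma frac_mult_cancel:
  "v \<in> carrier M \<Longrightarrow> p \<noteq> 0 \<Longrightarrow> r \<noteq> 0 \<Longrightarrow> frac M (pact M r v) (r * p) = frac M v p"
  by (simp add: frac_eq_iff pact_mult[symmetric] mult.commute)

lemma frac_zero: "p \<noteq> 0 \<Longrightarrow> frac M \<zero> p = frac M \<zero> 1"
  by (simp add: frac_eq_iff)

lemma rep_frac:
  assumes "v \<in> carrier M" "p \<noteq> 0"
  obtains v' p' where "rep (frac M v p) = (v', p')" "v' \<in> carrier M" "p' \<noteq> 0"
    "pact M p' v = pact M p v'"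
proof -
  have "(v, p) \<in> frac M v p"
    unfolding frac_def using assms by (intro equiv_class_self[OF equiv_frac_rel]) auto
  then have "rep (frac M v p) \<in> frac M v p"
    unfolding rep_def by (rule someI)
  then show ?thesis
    using that by (cases "rep (frac M v p)") (auto simp: frac_def frac_rel_iff)
qed

lemma carrier_Frat: "carrier (Frat M) = {frac M v p | v p. v \<in> carrier M \<and> p \<noteq> 0}"
  by (simp add: Frat_def)

lemma frac_in_Frat [simp]: "v \<in> carrier M \<Longrightarrow> p \<noteq> 0 \<Longrightarrow> frac M v p \<in> carrier (Frat M)"
  by (auto simp: carrier_Frat)

lemma Frat_cases:
  assumes "X \<in> carrier (Frat M)"
  obtains v p where "X = frac M v p" "v \<in> carrier M" "p \<noteq> 0"
  using assms by (auto simp: carrier_Frat)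

lemma zero_Frat: "\<zero>\<^bsub>Frat M\<^esub> = frac M \<zero> 1"
  by (simp add: Frat_def)

lemma Frat_add:
  assumes "v \<in> carrier M" "w \<in> carrier M" "p \<noteq> 0" "q \<noteq> 0"
  shows "frac M v p \<oplus>\<^bsub>Frat M\<^esub> frac M w q = frac M (pact M q v \<oplus> pact M p w) (p * q)"
proof -
  obtain v' p' where v': "rep (frac M v p) = (v', p')" "v' \<in> carrier M" "p' \<noteq> 0"
    "pact M p' v = pact M p v'"
    using rep_frac[OF assms(1,3)] by blast
  obtain w' q' where w': "rep (frac M w q) = (w', q')" "w' \<in> carrier M" "q' \<noteq> 0"
    "pact M q' w = pact M q w'"
    using rep_frac[OF assms(2,4)] by blast
  have "pact M (p * q) (pact M q' v') = pact M (q * q') (pact M p v')"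
    using v' by (simp add: pact_mult[symmetric] mult_ac)
  also have "\<dots> = pact M (p' * q') (pact M q v)"
    using assms v' by (simp flip: v'(4) add: pact_mult[symmetric] mult_ac)
  finally have v_scaled: "pact M (p * q) (pact M q' v') = pact M (p' * q') (pact M q v)" .
  have "pact M (p * q) (pact M p' w') = pact M (p * p') (pact M q w')"
    using w' by (simp add: pact_mult[symmetric] mult_ac)
  also have "\<dots> = pact M (p' * q') (pact M p w)"
    using assms w' by (simp flip: w'(4) add: pact_mult[symmetric] mult_ac)
  finally have w_scaled: "pact M (p * q) (pact M p' w') = pact M (p' * q') (pact M p w)" .
  have "frac M v p \<oplus>\<^bsub>Frat M\<^esub> frac M w q = frac M (pact M q' v' \<oplus> pact M p' w') (p' * q')"
    using v' w' by (simp add: Frat_def)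
  also have "\<dots> = frac M (pact M q v \<oplus> pact M p w) (p * q)"
    using assms v' w' v_scaled w_scaled by (simp add: frac_eq_iff pact_vadd)
  finally show ?thesis .
qed

lemma Frat_add_same_denom: "v \<in> carrier M \<Longrightarrow> w \<in> carrier M \<Longrightarrow> p \<noteq> 0 \<Longrightarrow>
    frac M v p \<oplus>\<^bsub>Frat M\<^esub> frac M w p = frac M (v \<oplus> w) p"
  by (simp add: Frat_add pact_vadd[symmetric] frac_mult_cancel)

lemma Frat_smult: "v \<in> carrier M \<Longrightarrow> p \<noteq> 0 \<Longrightarrow> c \<odot>\<^bsub>Frat M\<^esub> frac M v p = frac M (c \<odot> v) p"
  by (rule rep_frac[of v p]) (simp_all add: Frat_def frac_eq_iff pact_vsmult)

lemma Lz_Frat: "v \<in> carrier M \<Longrightarrow> p \<noteq> 0 \<Longrightarrow> Lz (Frat M) (frac M v p) = frac M (Lz M v) p"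
  by (rule rep_frac[of v p]) (simp_all add: Frat_def frac_eq_iff Lz_pact[symmetric])

lemma Lm_Frat: "v \<in> carrier M \<Longrightarrow> p \<noteq> 0 \<Longrightarrow>
    Lm (Frat M) (frac M v p) = frac M (Lm M v) (pcompose p [:-1, 1:])"
  by (rule rep_frac[of v p])
    (simp_all add: Frat_def frac_eq_iff Lm_pact[symmetric] pcompose_shift_nonzero)

lemma Lp_Frat: "v \<in> carrier M \<Longrightarrow> p \<noteq> 0 \<Longrightarrow>
    Lp (Frat M) (frac M v p) = frac M (Lp M v) (pcompose p [:1, 1:])"
  by (rule rep_frac[of v p])
    (simp_all add: Frat_def frac_eq_iff Lp_pact[symmetric] pcompose_shift_nonzero)

lemma abelian_group_Frat: "abelian_group (Frat M)"
proof (rule abelian_groupI)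
  fix X Y Z assume X: "X \<in> carrier (Frat M)" and Y: "Y \<in> carrier (Frat M)"
    and Z: "Z \<in> carrier (Frat M)"
  obtain v p where X_eq: "X = frac M v p" "v \<in> carrier M" "p \<noteq> 0"
    using X by (rule Frat_cases)
  obtain w q where Y_eq: "Y = frac M w q" "w \<in> carrier M" "q \<noteq> 0"
    using Y by (rule Frat_cases)
  obtain u r where Z_eq: "Z = frac M u r" "u \<in> carrier M" "r \<noteq> 0"
    using Z by (rule Frat_cases)
  show "X \<oplus>\<^bsub>Frat M\<^esub> Y \<in> carrier (Frat M)"
    using X_eq Y_eq by (simp add: Frat_add)
  show "X \<oplus>\<^bsub>Frat M\<^esub> Y = Y \<oplus>\<^bsub>Frat M\<^esub> X"
    using X_eq Y_eq by (simp add: Frat_add a_comm mult.commute)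
  have assoc_left: "X \<oplus>\<^bsub>Frat M\<^esub> Y \<oplus>\<^bsub>Frat M\<^esub> Z
      = frac M (pact M (r * q) v \<oplus> pact M (r * p) w \<oplus> pact M (p * q) u) (p * q * r)"
    using X_eq Y_eq Z_eq by (simp add: Frat_add pact_vadd pact_mult)
  have assoc_right: "X \<oplus>\<^bsub>Frat M\<^esub> (Y \<oplus>\<^bsub>Frat M\<^esub> Z)
      = frac M (pact M (q * r) v \<oplus> (pact M (p * r) w \<oplus> pact M (p * q) u)) (p * (q * r))"
    using X_eq Y_eq Z_eq by (simp add: Frat_add pact_vadd pact_mult)
  show "X \<oplus>\<^bsub>Frat M\<^esub> Y \<oplus>\<^bsub>Frat M\<^esub> Z = X \<oplus>\<^bsub>Frat M\<^esub> (Y \<oplus>\<^bsub>Frat M\<^esub> Z)"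
    unfolding assoc_left assoc_right using X_eq Y_eq Z_eq
    by (simp add: a_assoc mult.commute mult.left_commute)
next
  show "\<zero>\<^bsub>Frat M\<^esub> \<in> carrier (Frat M)"
    by (simp add: zero_Frat)
next
  fix X assume "X \<in> carrier (Frat M)"
  then obtain v p where X_eq: "X = frac M v p" "v \<in> carrier M" "p \<noteq> 0"
    by (rule Frat_cases)
  show "\<zero>\<^bsub>Frat M\<^esub> \<oplus>\<^bsub>Frat M\<^esub> X = X"
    using X_eq by (simp add: zero_Frat Frat_add)
  have "frac M (\<ominus> v) p \<oplus>\<^bsub>Frat M\<^esub> X = \<zero>\<^bsub>Frat M\<^esub>"
    using X_eq by (simp add: Frat_add_same_denom l_neg zero_Frat frac_zero[of p])
  then show "\<exists>Y\<in>carrier (Frat M). Y \<oplus>\<^bsub>Frat M\<^esub> X = \<zero>\<^bsub>Frat M\<^esub>"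
    using X_eq by (intro bexI[of _ "frac M (\<ominus> v) p"]) auto
qed

lemma module_Frat: "Module.module Cring (Frat M)"
proof (rule moduleI[OF cring_Cring abelian_group_Frat])
  fix a b :: complex and X Y
  assume X: "X \<in> carrier (Frat M)" and Y: "Y \<in> carrier (Frat M)"
  show "a \<odot>\<^bsub>Frat M\<^esub> X \<in> carrier (Frat M)"
    using X by (elim Frat_cases) (simp add: Frat_smult)
  show "(a \<oplus>\<^bsub>Cring\<^esub> b) \<odot>\<^bsub>Frat M\<^esub> X = a \<odot>\<^bsub>Frat M\<^esub> X \<oplus>\<^bsub>Frat M\<^esub> b \<odot>\<^bsub>Frat M\<^esub> X"
    using X by (elim Frat_cases) (simp add: Frat_smult Frat_add_same_denom smult_add_scalar)
  show "a \<odot>\<^bsub>Frat M\<^esub> (X \<oplus>\<^bsub>Frat M\<^esub> Y) = a \<odot>\<^bsub>Frat M\<^esub> X \<oplus>\<^bsub>Frat M\<^esub> a \<odot>\<^bsub>Frat M\<^esub> Y"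
    using X Y by (elim Frat_cases) (simp add: Frat_smult Frat_add smult_add_vec pact_vsmult)
  show "(a \<otimes>\<^bsub>Cring\<^esub> b) \<odot>\<^bsub>Frat M\<^esub> X = a \<odot>\<^bsub>Frat M\<^esub> (b \<odot>\<^bsub>Frat M\<^esub> X)"
    using X by (elim Frat_cases) (simp add: Frat_smult smult_mult_scalar)
  show "\<one>\<^bsub>Cring\<^esub> \<odot>\<^bsub>Frat M\<^esub> X = X"
    using X by (elim Frat_cases) (simp add: Frat_smult)
qed

lemma Frat_minus: "v \<in> carrier M \<Longrightarrow> p \<noteq> 0 \<Longrightarrow> \<ominus>\<^bsub>Frat M\<^esub> frac M v p = frac M (\<ominus> v) p"
  by (rule abelian_group.minus_equality[OF abelian_group_Frat])
    (simp_all add: Frat_add_same_denom l_neg zero_Frat frac_zero[of p])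

lemma Frat_diff_same_denom: "v \<in> carrier M \<Longrightarrow> w \<in> carrier M \<Longrightarrow> p \<noteq> 0 \<Longrightarrow>
    frac M v p \<ominus>\<^bsub>Frat M\<^esub> frac M w p = frac M (v \<ominus> w) p"
  by (simp add: a_minus_def Frat_minus Frat_add_same_denom)

lemma sl2_module_Frat: "sl2_module (Frat M)"
  unfolding sl2_module_def
proof (intro conjI module_Frat ballI)
  show "lin_map (Frat M) (Frat M) (Lm (Frat M))" "lin_map (Frat M) (Frat M) (Lz (Frat M))"
    "lin_map (Frat M) (Frat M) (Lp (Frat M))"
    unfolding lin_map_def
    by (auto elim!: Frat_cases simp: Lm_Frat Lz_Frat Lp_Frat Frat_add Frat_smult
        pcompose_shift_nonzero Lm_pact Lz_pact Lp_pact Lm_add Lz_add Lp_add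
        Lm_smult Lz_smult Lp_smult pcompose_mult)
next
  fix X assume "X \<in> carrier (Frat M)"
  then obtain v p where X_eq: "X = frac M v p" "v \<in> carrier M" "p \<noteq> 0"
    by (rule Frat_cases)
  then show "Lp (Frat M) (Lm (Frat M) X) \<ominus>\<^bsub>Frat M\<^esub> Lm (Frat M) (Lp (Frat M) X)
      = (2::complex) \<odot>\<^bsub>Frat M\<^esub> Lz (Frat M) X"
    "Lz (Frat M) (Lp (Frat M) X) \<ominus>\<^bsub>Frat M\<^esub> Lp (Frat M) (Lz (Frat M) X)
      = \<ominus>\<^bsub>Frat M\<^esub> Lp (Frat M) X"
    "Lz (Frat M) (Lm (Frat M) X) \<ominus>\<^bsub>Frat M\<^esub> Lm (Frat M) (Lz (Frat M) X) = Lm (Frat M) X"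
    by (simp_all add: Lm_Frat Lz_Frat Lp_Frat pcompose_shift_nonzero pcompose_shift_down_up
        pcompose_shift_up_down Frat_diff_same_denom commutation_relations Frat_smult Frat_minus)
qed

end

sublocale tf_sl2_rep \<subseteq> Frat: sl2_rep "Frat M"
  by unfold_locales (rule sl2_module_Frat)

context tf_sl2_rep
begin

lemma pact_Frat: "v \<in> carrier M \<Longrightarrow> p \<noteq> 0 \<Longrightarrow> pact (Frat M) r (frac M v p) = frac M (pact M r v) p"
  by (induction r)
    (simp_all add: Frat.pact_pCons zero_Frat frac_zero[of p] Frat_smult Lz_Frat
      Frat_add_same_denom pact_pCons)

lemma torsion_free_Frat: "torsion_free (Frat M)"
  unfolding torsion_free_def
proof (intro allI impI ballI)
  fix s X assume s: "s \<noteq> 0" and X: "X \<in> carrier (Frat M)"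
    and sX: "pact (Frat M) s X = \<zero>\<^bsub>Frat M\<^esub>"
  obtain v p where X_eq: "X = frac M v p" "v \<in> carrier M" "p \<noteq> 0"
    using X by (rule Frat_cases)
  have "frac M (pact M s v) p = frac M \<zero> 1"
    using sX X_eq by (simp add: pact_Frat zero_Frat)
  then have "pact M s v = \<zero>"
    using X_eq by (simp add: frac_eq_iff)
  with s X_eq(2) have "v = \<zero>"
    by (rule pact_eq_zero_imp)
  then show "X = \<zero>\<^bsub>Frat M\<^esub>"
    using X_eq by (simp add: zero_Frat frac_zero[of p])
qed

lemma inj_on_pact_Frat:
  assumes r: "r \<noteq> 0"
  shows "inj_on (pact (Frat M) r) (carrier (Frat M))"
proof (rule inj_onI)
  fix X Y assume X: "X \<in> carrier (Frat M)" and Y: "Y \<in> carrier (Frat M)"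
    and rXY: "pact (Frat M) r X = pact (Frat M) r Y"
  obtain v p where X_eq: "X = frac M v p" "v \<in> carrier M" "p \<noteq> 0"
    using X by (rule Frat_cases)
  obtain w q where Y_eq: "Y = frac M w q" "w \<in> carrier M" "q \<noteq> 0"
    using Y by (rule Frat_cases)
  have "pact M r (pact M q v) = pact M q (pact M r v)"
    using X_eq(2) by (rule pact_commute)
  also have "\<dots> = pact M p (pact M r w)"
    using rXY X_eq Y_eq by (simp add: pact_Frat frac_eq_iff)
  also have "\<dots> = pact M r (pact M p w)"
    using Y_eq(2) by (rule pact_commute)
  finally have "pact M q v = pact M p w"
    using r X_eq Y_eq pact_cancel[of r "pact M q v" "pact M p w"] by simp
  then show "X = Y"
    using X_eq Y_eq by (simp add: frac_eq_iff)
qed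

lemma pact_Frat_surj:
  assumes r: "r \<noteq> 0"
  shows "pact (Frat M) r ` carrier (Frat M) = carrier (Frat M)"
proof (intro equalityI subsetI)
  fix X assume "X \<in> carrier (Frat M)"
  then obtain v p where X_eq: "X = frac M v p" "v \<in> carrier M" "p \<noteq> 0"
    by (rule Frat_cases)
  then have "X = pact (Frat M) r (frac M v (r * p))"
    using r by (simp add: pact_Frat frac_mult_cancel)
  then show "X \<in> pact (Frat M) r ` carrier (Frat M)"
    using X_eq r by simp
qed auto

lemma bij_betw_pact_Frat: "r \<noteq> 0 \<Longrightarrow> bij_betw (pact (Frat M) r) (carrier (Frat M)) (carrier (Frat M))"
  by (simp add: bij_betw_def inj_on_pact_Frat pact_Frat_surj)

lemma sl2_hom_eta: "sl2_hom M (Frat M) (eta M)"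
  unfolding sl2_hom_def lin_map_def eta_def
  by (auto simp: Frat_add_same_denom Frat_smult Lm_Frat Lz_Frat Lp_Frat pcompose_1)

lemma eta_in_Frat [simp]: "v \<in> carrier M \<Longrightarrow> eta M v \<in> carrier (Frat M)"
  by (simp add: eta_def)

lemma pact_eta: "v \<in> carrier M \<Longrightarrow> pact (Frat M) r (eta M v) = eta M (pact M r v)"
  by (simp add: eta_def pact_Frat)

lemma inj_on_eta: "inj_on (eta M) (carrier M)"
  by (rule inj_onI) (simp add: eta_def frac_eq_iff)

lemma eta_finsum:
  "finite A \<Longrightarrow> g \<in> A \<rightarrow> carrier M \<Longrightarrow> eta M (finsum M g A) = finsum (Frat M) (eta M \<circ> g) A"
proof (induction A rule: finite_induct)
  case empty
  then show ?case by (simp add: eta_def zero_Frat)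
next
  case (insert a A)
  then have "eta M \<circ> g \<in> A \<rightarrow> carrier (Frat M)" "eta M (g a) \<in> carrier (Frat M)"
    by (auto simp: eta_def Pi_iff)
  with insert show ?case
    by (simp add: eta_def Frat_add_same_denom[symmetric] Pi_iff)
qed

end

locale tffr_sl2_rep = tf_sl2_rep +
  assumes finite_rank: "finite_rank M"
begin

lemma finite_rank_Frat: "finite_rank (Frat M)"
proof -
  obtain B where B: "finite B" "B \<subseteq> carrier M"
    and spans: "\<And>v. v \<in> carrier M \<Longrightarrow> \<exists>s. s \<noteq> 0 \<and> pact M s v \<in> pspan M B"
    using finite_rank unfolding finite_rank_def by blast
  have inj: "inj_on (eta M) B"
    using inj_on_eta B(2) by (rule inj_on_subset)
  have "\<exists>s. s \<noteq> 0 \<and> pact (Frat M) s X \<in> pspan (Frat M) (eta M ` B)"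
    if X: "X \<in> carrier (Frat M)" for X
  proof -
    obtain v p where X_eq: "X = frac M v p" "v \<in> carrier M" "p \<noteq> 0"
      using X by (rule Frat_cases)
    obtain s c where s: "s \<noteq> 0" "pact M s v = finsum M (\<lambda>b. pact M (c b) b) B"
      using spans[OF X_eq(2)] unfolding pspan_def by blast
    define c' where "c' = c \<circ> inv_into B (eta M)"
    have c': "c' (eta M b) = c b" if "b \<in> B" for b
      using inv_into_f_f[OF inj that] by (simp add: c'_def)
    have "pact (Frat M) (s * p) X = eta M (pact M s v)"
      using X_eq s(1) by (simp add: pact_Frat eta_def frac_eq_iff pact_mult[symmetric] mult.commute)
    also have "\<dots> = finsum (Frat M) (eta M \<circ> (\<lambda>b. pact M (c b) b)) B"
      unfolding s(2) using B by (intro eta_finsum) auto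
    also have "\<dots> = finsum (Frat M) (\<lambda>b. pact (Frat M) (c' (eta M b)) (eta M b)) B"
      using B by (intro Frat.finsum_cong') (auto simp: c' pact_eta)
    also have "\<dots> = finsum (Frat M) (\<lambda>Y. pact (Frat M) (c' Y) Y) (eta M ` B)"
      using B inj by (intro Frat.finsum_reindex[symmetric]) auto
    finally show ?thesis
      using s X_eq unfolding pspan_def by (intro exI[of _ "s * p"]) auto
  qed
  moreover have "finite (eta M ` B)" "eta M ` B \<subseteq> carrier (Frat M)"
    using B by (auto simp: eta_def)
  ultimately show ?thesis
    unfolding finite_rank_def by blast
qed

lemma rational_Frat: "rational (Frat M)"
  unfolding rational_def tffr_def
  using sl2_module_Frat torsion_free_Frat finite_rank_Frat bij_betw_pact_Frat by blast

end

lemma tffr_imp_tffr_sl2_rep: "tffr M \<Longrightarrow> tffr_sl2_rep M"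
  unfolding tffr_def by unfold_locales simp_all

lemma tffr_imp_tf_sl2_rep: "tffr M \<Longrightarrow> tf_sl2_rep M"
  using tffr_imp_tffr_sl2_rep tffr_sl2_rep.axioms(1) by blast

lemma sl2_hom_id: "sl2_hom M M id"
  by (simp add: sl2_hom_def lin_map_def)

locale tf_sl2_pair = V: tf_sl2_rep V + W: tf_sl2_rep W
  for V :: "'a sl2mod" and W :: "'b sl2mod"
begin

lemma Fmor_frac:
  assumes f: "sl2_hom V W f" and v: "v \<in> carrier V" and p: "p \<noteq> 0"
  shows "Fmor V W f (frac V v p) = frac W (f v) p"
proof -
  obtain v' p' where v': "rep (frac V v p) = (v', p')" "v' \<in> carrier V" "p' \<noteq> 0"
    "pact V p' v = pact V p v'"
    using V.rep_frac[OF v p] by blast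
  have "pact W p (f v') = pact W p' (f v)"
    using v' v by (metis sl2_hom_pact[OF V.sl2_rep_axioms W.sl2_rep_axioms f])
  then show ?thesis
    using v' v p f by (simp add: Fmor_def W.frac_eq_iff sl2_hom_closed)
qed

lemma Fmor_eta: "sl2_hom V W f \<Longrightarrow> v \<in> carrier V \<Longrightarrow> Fmor V W f (eta V v) = eta W (f v)"
  by (simp add: eta_def Fmor_frac)

lemma sl2_hom_Fmor:
  assumes f: "sl2_hom V W f"
  shows "sl2_hom (Frat V) (Frat W) (Fmor V W f)"
  unfolding sl2_hom_def lin_map_def
  by (auto elim!: V.Frat_cases simp: Fmor_frac[OF f] V.Frat_add W.Frat_add V.Frat_smult
      W.Frat_smult V.Lm_Frat W.Lm_Frat V.Lz_Frat W.Lz_Frat V.Lp_Frat W.Lp_Frat sl2_hom_closed[OF f]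
      sl2_hom_add[OF f] sl2_hom_commute[OF f]
      sl2_hom_pact[OF V.sl2_rep_axioms W.sl2_rep_axioms f] pcompose_shift_nonzero)

lemma eq_if_Fmor_eq:
  assumes f: "sl2_hom V W f" and g: "sl2_hom V W g"
    and Fmor_eq: "\<forall>X\<in>carrier (Frat V). Fmor V W f X = Fmor V W g X" and v: "v \<in> carrier V"
  shows "f v = g v"
proof -
  have "eta W (f v) = eta W (g v)"
    using Fmor_eq v by (simp flip: Fmor_eta[OF f v] Fmor_eta[OF g v])
  then show ?thesis
    using W.inj_on_eta f g v by (auto dest: inj_onD simp: sl2_hom_closed)
qed

end

lemma tffr_imp_tf_sl2_pair: "tffr V \<Longrightarrow> tffr W \<Longrightarrow> tf_sl2_pair V W"
  by (intro tf_sl2_pair.intro tffr_imp_tf_sl2_rep)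

lemma Fmor_id:
  assumes "tf_sl2_rep V" "X \<in> carrier (Frat V)"
  shows "Fmor V V id X = X"
proof -
  interpret tf_sl2_pair V V
    by (rule tf_sl2_pair.intro[OF assms(1) assms(1)])
  show ?thesis
    using assms(2) by (elim V.Frat_cases) (simp add: Fmor_frac[OF sl2_hom_id])
qed

lemma Fmor_comp:
  assumes "tf_sl2_rep V" "tf_sl2_rep V'" "tf_sl2_rep V''"
    and f: "sl2_hom V V' f" and g: "sl2_hom V' V'' g" and X: "X \<in> carrier (Frat V)"
  shows "Fmor V V'' (g \<circ> f) X = Fmor V' V'' g (Fmor V V' f X)"
proof -
  interpret VV': tf_sl2_pair V V' by (rule tf_sl2_pair.intro[OF assms(1,2)])
  interpret V'V'': tf_sl2_pair V' V'' by (rule tf_sl2_pair.intro[OF assms(2,3)])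
  interpret VV'': tf_sl2_pair V V'' by (rule tf_sl2_pair.intro[OF assms(1,3)])
  show ?thesis
    using X by (elim VV'.V.Frat_cases)
      (simp add: VV'.Fmor_frac[OF f] V'V''.Fmor_frac[OF g] VV''.Fmor_frac[OF sl2_hom_comp[OF f g]]
        sl2_hom_closed[OF f])
qed

definition Frat_lift :: "'a sl2mod \<Rightarrow> 'b sl2mod \<Rightarrow> ('a \<Rightarrow> 'b) \<Rightarrow> ('a \<times> complex poly) set \<Rightarrow> 'b" where
  "Frat_lift V W f X = (case rep X of (v, p) \<Rightarrow> THE w. w \<in> carrier W \<and> pact W p w = f v)"

locale tf_to_rational = tf_sl2_pair V W for V :: "'a sl2mod" and W :: "'b sl2mod" +
  fixes f :: "'a \<Rightarrow> 'b"
  assumes rational: "rational W" and f: "sl2_hom V W f"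
begin

lemma f_pact: "v \<in> carrier V \<Longrightarrow> f (pact V q v) = pact W q (f v)"
  using sl2_hom_pact[OF V.sl2_rep_axioms W.sl2_rep_axioms f] by blast

lemma pact_surj: "p \<noteq> 0 \<Longrightarrow> y \<in> carrier W \<Longrightarrow> \<exists>w\<in>carrier W. pact W p w = y"
  using rational unfolding rational_def bij_betw_def by (metis imageE)

lemma Frat_lift_frac_eqI:
  assumes v: "v \<in> carrier V" and p: "p \<noteq> 0" and w: "w \<in> carrier W" and pw: "pact W p w = f v"
  shows "Frat_lift V W f (frac V v p) = w"
proof -
  obtain v' p' where v': "rep (frac V v p) = (v', p')" "v' \<in> carrier V" "p' \<noteq> 0"
    "pact V p' v = pact V p v'"
    using V.rep_frac[OF v p] by blast
  have "pact W p (pact W p' w) = pact W p' (pact W p w)"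
    using w by (rule W.pact_commute)
  also have "\<dots> = pact W p (f v')"
    using pw v v' by (simp flip: f_pact)
  finally have p'w: "pact W p' w = f v'"
    using W.pact_cancel[OF p, of "pact W p' w" "f v'"] w v'(2) sl2_hom_closed[OF f] by simp
  have "(THE w. w \<in> carrier W \<and> pact W p' w = f v') = w"
    using W.pact_cancel[OF v'(3)] w p'w by (intro the_equality) auto
  then show ?thesis
    using v' by (simp add: Frat_lift_def)
qed

lemma Frat_lift_frac:
  assumes v: "v \<in> carrier V" and p: "p \<noteq> 0"
  shows "Frat_lift V W f (frac V v p) \<in> carrier W"
    and "pact W p (Frat_lift V W f (frac V v p)) = f v"
proof -
  obtain w where "w \<in> carrier W" "pact W p w = f v"
    using pact_surj[OF p] sl2_hom_closed[OF f v] by blast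
  then show "Frat_lift V W f (frac V v p) \<in> carrier W"
    and "pact W p (Frat_lift V W f (frac V v p)) = f v"
    using Frat_lift_frac_eqI[OF v p] by simp_all
qed

lemma Frat_lift_add:
  assumes X: "X \<in> carrier (Frat V)" and Y: "Y \<in> carrier (Frat V)"
  shows "Frat_lift V W f (X \<oplus>\<^bsub>Frat V\<^esub> Y) = Frat_lift V W f X \<oplus>\<^bsub>W\<^esub> Frat_lift V W f Y"
proof -
  obtain v p where X_eq: "X = frac V v p" "v \<in> carrier V" "p \<noteq> 0"
    using X by (rule V.Frat_cases)
  obtain w q where Y_eq: "Y = frac V w q" "w \<in> carrier V" "q \<noteq> 0"
    using Y by (rule V.Frat_cases)
  define a b where "a = Frat_lift V W f X" and "b = Frat_lift V W f Y"
  have a: "a \<in> carrier W" "pact W p a = f v"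
    using Frat_lift_frac[OF X_eq(2,3)] X_eq(1) a_def by auto
  have b: "b \<in> carrier W" "pact W q b = f w"
    using Frat_lift_frac[OF Y_eq(2,3)] Y_eq(1) b_def by auto
  have "pact W (p * q) (a \<oplus>\<^bsub>W\<^esub> b) = pact W q (pact W p a) \<oplus>\<^bsub>W\<^esub> pact W p (pact W q b)"
    using a(1) b(1) by (simp add: W.pact_vadd W.pact_mult W.pact_commute[of a p q])
  also have "\<dots> = f (pact V q v \<oplus>\<^bsub>V\<^esub> pact V p w)"
    using a b X_eq Y_eq by (simp add: sl2_hom_closed[OF f] sl2_hom_add[OF f] f_pact)
  finally have "Frat_lift V W f (frac V (pact V q v \<oplus>\<^bsub>V\<^esub> pact V p w) (p * q)) = a \<oplus>\<^bsub>W\<^esub> b"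
    using a b X_eq Y_eq by (intro Frat_lift_frac_eqI) auto
  then show ?thesis
    using X_eq Y_eq a_def b_def by (simp add: V.Frat_add)
qed

lemma Frat_lift_operators:
  assumes X: "X \<in> carrier (Frat V)"
  shows "Frat_lift V W f (c \<odot>\<^bsub>Frat V\<^esub> X) = c \<odot>\<^bsub>W\<^esub> Frat_lift V W f X"
    and "Frat_lift V W f (Lm (Frat V) X) = Lm W (Frat_lift V W f X)"
    and "Frat_lift V W f (Lz (Frat V) X) = Lz W (Frat_lift V W f X)"
    and "Frat_lift V W f (Lp (Frat V) X) = Lp W (Frat_lift V W f X)"
proof -
  obtain v p where X_eq: "X = frac V v p" "v \<in> carrier V" "p \<noteq> 0"
    using X by (rule V.Frat_cases)
  define a where "a = Frat_lift V W f X"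
  have a: "a \<in> carrier W" "pact W p a = f v"
    using Frat_lift_frac[OF X_eq(2,3)] X_eq(1) a_def by auto
  have "Frat_lift V W f (frac V (c \<odot>\<^bsub>V\<^esub> v) p) = c \<odot>\<^bsub>W\<^esub> a"
    using a X_eq by (intro Frat_lift_frac_eqI) (simp_all add: W.pact_vsmult sl2_hom_commute[OF f])
  moreover have "Frat_lift V W f (frac V (Lm V v) (pcompose p [:-1, 1:])) = Lm W a"
    using a X_eq by (intro Frat_lift_frac_eqI)
      (simp_all add: W.Lm_pact[symmetric] sl2_hom_commute[OF f] pcompose_shift_nonzero)
  moreover have "Frat_lift V W f (frac V (Lz V v) p) = Lz W a"
    using a X_eq by (intro Frat_lift_frac_eqI)
      (simp_all add: W.Lz_pact[symmetric] sl2_hom_commute[OF f])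
  moreover have "Frat_lift V W f (frac V (Lp V v) (pcompose p [:1, 1:])) = Lp W a"
    using a X_eq by (intro Frat_lift_frac_eqI)
      (simp_all add: W.Lp_pact[symmetric] sl2_hom_commute[OF f] pcompose_shift_nonzero)
  ultimately show "Frat_lift V W f (c \<odot>\<^bsub>Frat V\<^esub> X) = c \<odot>\<^bsub>W\<^esub> Frat_lift V W f X"
    and "Frat_lift V W f (Lm (Frat V) X) = Lm W (Frat_lift V W f X)"
    and "Frat_lift V W f (Lz (Frat V) X) = Lz W (Frat_lift V W f X)"
    and "Frat_lift V W f (Lp (Frat V) X) = Lp W (Frat_lift V W f X)"
    using X_eq by (simp_all add: a_def V.Frat_smult V.Lm_Frat V.Lz_Frat V.Lp_Frat)
qed

lemma sl2_hom_Frat_lift: "sl2_hom (Frat V) W (Frat_lift V W f)"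
proof -
  have "Frat_lift V W f X \<in> carrier W" if "X \<in> carrier (Frat V)" for X
    using that by (elim V.Frat_cases) (simp add: Frat_lift_frac)
  then show ?thesis
    unfolding sl2_hom_def lin_map_def by (simp add: Frat_lift_add Frat_lift_operators)
qed

lemma Frat_lift_eta: "v \<in> carrier V \<Longrightarrow> Frat_lift V W f (eta V v) = f v"
  unfolding eta_def by (rule Frat_lift_frac_eqI) (simp_all add: sl2_hom_closed[OF f])

lemma Frat_lift_unique:
  assumes h: "sl2_hom (Frat V) W h" and h_eta: "\<forall>v\<in>carrier V. h (eta V v) = f v"
    and X: "X \<in> carrier (Frat V)"
  shows "h X = Frat_lift V W f X"
proof -
  obtain v p where X_eq: "X = frac V v p" "v \<in> carrier V" "p \<noteq> 0"
    using X by (rule V.Frat_cases)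
  have "pact W p (h X) = h (pact (Frat V) p X)"
    using sl2_hom_pact[OF V.Frat.sl2_rep_axioms W.sl2_rep_axioms h X] by simp
  also have "\<dots> = h (eta V v)"
    using X_eq V.frac_eq_iff[of "pact V p v" v p 1] by (simp add: V.pact_Frat eta_def)
  also have "\<dots> = f v"
    using h_eta X_eq by simp
  finally show ?thesis
    using X_eq sl2_hom_closed[OF h X] by (simp add: Frat_lift_frac_eqI)
qed

end

lemma rational_imp_tf_sl2_rep: "rational W \<Longrightarrow> tf_sl2_rep W"
  unfolding rational_def by (blast intro: tffr_imp_tf_sl2_rep)

lemma Frat_universal_property:
  assumes "tf_sl2_rep V" "rational W" "sl2_hom V W f"
  shows "\<exists>g. sl2_hom (Frat V) W g \<and> (\<forall>v\<in>carrier V. g (eta V v) = f v)"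
    and "sl2_hom (Frat V) W g \<Longrightarrow> \<forall>v\<in>carrier V. g (eta V v) = f v \<Longrightarrow>
      sl2_hom (Frat V) W g' \<Longrightarrow> \<forall>v\<in>carrier V. g' (eta V v) = f v \<Longrightarrow>
      X \<in> carrier (Frat V) \<Longrightarrow> g X = g' X"
proof -
  interpret tf_to_rational V W f
    using tf_sl2_pair.intro[OF assms(1) rational_imp_tf_sl2_rep[OF assms(2)]] assms(2,3)
    by (rule tf_to_rational.intro[OF _ tf_to_rational_axioms.intro])
  show "\<exists>g. sl2_hom (Frat V) W g \<and> (\<forall>v\<in>carrier V. g (eta V v) = f v)"
    using sl2_hom_Frat_lift Frat_lift_eta by blast
  show "sl2_hom (Frat V) W g \<Longrightarrow> \<forall>v\<in>carrier V. g (eta V v) = f v \<Longrightarrow>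
      sl2_hom (Frat V) W g' \<Longrightarrow> \<forall>v\<in>carrier V. g' (eta V v) = f v \<Longrightarrow>
      X \<in> carrier (Frat V) \<Longrightarrow> g X = g' X"
    by (simp add: Frat_lift_unique)
qed

theorem theorem7p7:
  shows
  \<comment> \<open>F_rat lands in R and the unit v \<mapsto> v/1 is a morphism\<close>
  "(\<forall>V :: 'a sl2mod. tffr V \<longrightarrow> rational (Frat V) \<and> sl2_hom V (Frat V) (eta V))
   \<comment> \<open>F_rat is a functor\<close>
   \<and> (\<forall>(V :: 'a sl2mod) (V' :: 'b sl2mod) f. tffr V \<and> tffr V' \<and> sl2_hom V V' f \<longrightarrow>
         sl2_hom (Frat V) (Frat V') (Fmor V V' f))
   \<and> (\<forall>V :: 'a sl2mod. tffr V \<longrightarrow> (\<forall>X\<in>carrier (Frat V). Fmor V V id X = X))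
   \<and> (\<forall>(V :: 'a sl2mod) (V' :: 'b sl2mod) (V'' :: 'c sl2mod) f g.
         tffr V \<and> tffr V' \<and> tffr V'' \<and> sl2_hom V V' f \<and> sl2_hom V' V'' g \<longrightarrow>
         (\<forall>X\<in>carrier (Frat V). Fmor V V'' (g \<circ> f) X = Fmor V' V'' g (Fmor V V' f X)))
   \<comment> \<open>naturality of the unit\<close>
   \<and> (\<forall>(V :: 'a sl2mod) (V' :: 'b sl2mod) f. tffr V \<and> tffr V' \<and> sl2_hom V V' f \<longrightarrow>
         (\<forall>v\<in>carrier V. Fmor V V' f (eta V v) = eta V' (f v)))
   \<comment> \<open>universal property: Hom_R(F_rat V, W) \<cong> Hom_tffr(V, i W) via composition with eta\<close>
   \<and> (\<forall>(V :: 'a sl2mod) (W :: 'b sl2mod) f. tffr V \<and> rational W \<and> sl2_hom V W f \<longrightarrow>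
         (\<exists>g. sl2_hom (Frat V) W g \<and> (\<forall>v\<in>carrier V. g (eta V v) = f v)) \<and>
         (\<forall>g g'. sl2_hom (Frat V) W g \<and> (\<forall>v\<in>carrier V. g (eta V v) = f v) \<and>
                 sl2_hom (Frat V) W g' \<and> (\<forall>v\<in>carrier V. g' (eta V v) = f v) \<longrightarrow>
                 (\<forall>X\<in>carrier (Frat V). g X = g' X)))
   \<comment> \<open>F_rat is faithful\<close>
   \<and> (\<forall>(V :: 'a sl2mod) (V' :: 'b sl2mod) f g.
         tffr V \<and> tffr V' \<and> sl2_hom V V' f \<and> sl2_hom V V' g \<and>
         (\<forall>X\<in>carrier (Frat V). Fmor V V' f X = Fmor V V' g X) \<longrightarrow>
         (\<forall>v\<in>carrier V. f v = g v))"
  apply (intro conjI allI impI ballI; (elim conjE)?)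
  subgoal by (rule tffr_sl2_rep.rational_Frat[OF tffr_imp_tffr_sl2_rep])
  subgoal by (rule tf_sl2_rep.sl2_hom_eta[OF tffr_imp_tf_sl2_rep])
  subgoal by (rule tf_sl2_pair.sl2_hom_Fmor[OF tffr_imp_tf_sl2_pair])
  subgoal by (rule Fmor_id[OF tffr_imp_tf_sl2_rep])
  subgoal by (rule Fmor_comp[OF tffr_imp_tf_sl2_rep tffr_imp_tf_sl2_rep tffr_imp_tf_sl2_rep])
  subgoal by (rule tf_sl2_pair.Fmor_eta[OF tffr_imp_tf_sl2_pair])
  subgoal by (rule Frat_universal_property(1)[OF tffr_imp_tf_sl2_rep])
  subgoal by (rule Frat_universal_property(2)[OF tffr_imp_tf_sl2_rep])
  subgoal by (rule tf_sl2_pair.eq_if_Fmor_eq[OF tffr_imp_tf_sl2_pair])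
  done

end
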